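(* Let $L>0$, $\beta\in(0,1]$ and $f:[0,L]\to\mathbb R$ with $f\in W^{1,\frac1{1-\beta}}(0,L)$ (with $\frac1{1-\beta}=\infty$ when $\beta=1$). Then: (1) if $f$ attains its maximum over $[0,L]$ at a point $x_0\in(0,L]$, then for every $\alpha\in(0,\beta)$, $(D^\alpha f)(x_0)\ge0$; furthermore, if $f$ is not constant on $[0,x_0]$, then $(D^\alpha f)(x_0)>0$; (2) if $f$ attains its minimum over $[0,L]$ at a point $x_0\in(0,L]$, then for every $\alpha\in(0,\beta)$, $(D^\alpha f)(x_0)\le0$; furthermore, if $f$ is not constant on $[0,x_0]$, then $(D^\alpha f)(x_0)<0$.
   Context: For $\alpha\in(0,1)$, the Caputo derivative is $D^{\alpha}f(x)=\frac{1}{\Gamma(1-\alpha)}\frac{d}{dx}\int_0^x(x-p)^{-\alpha}[f(p)-f(0)]\,dp$; for absolutely continuous $f$ this equals $\frac{1}{\Gamma(1-\alpha)}\int_0^x(x-p)^{-\alpha}f'(p)\,dp$. *)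

theory Defs
  imports "HOL-Analysis.Analysis"
begin

text \<open>Sobolev space W^{1,p}(0,L) with p = 1/(1-beta) (p = infinity when beta = 1),
  described through the (continuous representative of) f and a weak derivative g:
  g is in L^p(0,L) and f x = f 0 + integral of g over [0,x] for all x in [0,L].\<close>

definition sobolev_W1p_deriv ::
  "real \<Rightarrow> real \<Rightarrow> (real \<Rightarrow> real) \<Rightarrow> (real \<Rightarrow> real) \<Rightarrow> bool" where
  "sobolev_W1p_deriv L \<beta> f g \<longleftrightarrow>
     set_borel_measurable lborel {0..L} g \<and>
     (if \<beta> = 1 then (\<exists>C. AE x in lborel. x \<in> {0..L} \<longrightarrow> \<bar>g x\<bar> \<le> C)
      else set_integrable lborel {0..L} (\<lambda>x. \<bar>g x\<bar> powr (1 / (1 - \<beta>)))) \<and>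
     (\<forall>x\<in>{0..L}. f x = f 0 + (LINT t:{0..x}|lborel. g t))"

definition caputo :: "real \<Rightarrow> (real \<Rightarrow> real) \<Rightarrow> real \<Rightarrow> real" where
  "caputo \<alpha> g x = (1 / Gamma (1 - \<alpha>)) * (LINT p:{0..x}|lborel. (x - p) powr (- \<alpha>) * g p)"

end

(*
  Integrating by parts, i.e. exchanging the order of integration over the triangle
  0 <= s <= p < a, turns the Caputo derivative of f = f 0 + (integral of g) into Marchaud form

    Gamma(1 - alpha) D^alpha f(a)
      = a^(-alpha) (f a - f 0) + alpha * integral_0^a (a - s)^(-alpha-1) (f a - f s) ds.

  The exchange is legitimate because alpha < beta: by Young's inequality with exponents 1/beta
  and 1/(1-beta), the weight (a - p)^(-alpha) times g is integrable. At a maximum of f on [0,a]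
  both terms are nonnegative; if f is not constant there, continuity of f yields an interval on
  which f s < f a, so the integral is strictly positive. Minima are maxima of -f.
*)
theory Submission
  imports Defs
begin

lemma Youngs_inequality_unweighted:
  fixes x y b :: real
  assumes "0 \<le> x" "0 \<le> y" "0 < b" "b < 1"
  shows "x * y \<le> x powr (1/b) + y powr (1/(1-b))"
proof -
  have "x * y \<le> x powr (1/b) / (1/b) + y powr (1/(1-b)) / (1/(1-b))"
    by (rule Youngs_inequality) (use assms in \<open>auto simp: field_simps\<close>)
  also have "\<dots> = b * x powr (1/b) + (1-b) * y powr (1/(1-b))"
    by simp
  also have "\<dots> \<le> x powr (1/b) + y powr (1/(1-b))"
    using assms by (intro add_mono) (auto intro!: mult_left_le_one_le)
  finally show ?thesis .
qed

lemma set_integrable_powr_kernel: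
  fixes a r :: real
  assumes "0 \<le> a" "r < 1"
  shows "set_integrable lborel {0..<a} (\<lambda>p. (a - p) powr (- r))"
proof -
  have "(\<lambda>x. x powr (-r)) absolutely_integrable_on {0<..a}"
    by (rule nonnegative_absolutely_integrable_1[OF integrable_on_powr_from_0'])
       (use assms in auto)
  then have "integrable lborel (\<lambda>x. indicator {0<..a} x * x powr (-r))"
    by (simp add: set_integrable_def absolutely_integrable_on_def)
       (subst (asm) integrable_completion; auto)
  then have "integrable lborel (\<lambda>x. indicator {0<..a} (a + (-1) * x) * (a + (-1) * x) powr (-r))"
    by (subst lborel_integrable_real_affine_iff) auto
  moreover have "indicator {0<..a} (a + (-1) * x) = (indicator {0..<a} x :: real)" for x
    by (auto simp: indicator_def)
  ultimately show ?thesis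
    by (simp add: set_integrable_def)
qed

lemma set_integral_atLeastAtMost_eq_atLeastLessThan:
  fixes f :: "real \<Rightarrow> 'a::{banach, second_countable_topology}"
  assumes "set_borel_measurable lborel {a..b} f"
  shows "(LINT x:{a..b}|lborel. f x) = (LINT x:{a..<b}|lborel. f x)"
proof (rule set_integral_cong_set)
  show "set_borel_measurable lborel {a..<b} f"
    by (rule set_borel_measurable_subset[OF assms]) auto
  show "AE x in lborel. (x \<in> {a..<b}) = (x \<in> {a..b})"
    using AE_lborel_singleton[of b] by eventually_elim auto
qed (use assms in auto)

lemma powr_kernel_integral:
  fixes a \<alpha> p :: real
  assumes "0 \<le> p" "p < a"
  shows "(LINT s:{0..p}|lborel. \<alpha> * (a - s) powr (-\<alpha>-1)) = (a - p) powr (-\<alpha>) - a powr (-\<alpha>)"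
proof -
  have "(LINT s:{0..p}|lborel. \<alpha> * (a - s) powr (-\<alpha>-1))
      = (\<lambda>s. (a - s) powr (-\<alpha>)) p - (\<lambda>s. (a - s) powr (-\<alpha>)) 0"
    unfolding set_lebesgue_integral_def
  proof (rule integral_FTC_atLeastAtMost)
    fix x assume x: "0 \<le> x" "x \<le> p"
    have "((\<lambda>s. (a - s) powr (-\<alpha>)) has_real_derivative \<alpha> * (a - x) powr (-\<alpha>-1)) (at x)"
      using x assms by (auto intro!: derivative_eq_intros simp: powr_diff field_simps)
    then show "((\<lambda>s. (a - s) powr (-\<alpha>)) has_vector_derivative \<alpha> * (a - x) powr (-\<alpha>-1))
        (at x within {0..p})"
      by (simp add: has_real_derivative_iff_has_vector_derivative has_vector_derivative_at_within)
  next
    show "continuous_on {0..p} (\<lambda>s. \<alpha> * (a - s) powr (-\<alpha>-1))"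
      using assms by (intro continuous_intros) auto
  qed (use assms in auto)
  then show ?thesis
    by simp
qed

lemma sobolev_W1p_derivD:
  assumes "sobolev_W1p_deriv L \<beta> f g"
  shows "set_borel_measurable lborel {0..L} g"
    and "x \<in> {0..L} \<Longrightarrow> f x = f 0 + (LINT t:{0..x}|lborel. g t)"
  using assms unfolding sobolev_W1p_deriv_def by blast+

lemma sobolev_W1p_deriv_weighted_integrable:
  fixes L \<beta> :: real and f g w :: "real \<Rightarrow> real" and A :: "real set"
  assumes sob: "sobolev_W1p_deriv L \<beta> f g" and "0 < \<beta>" "\<beta> \<le> 1"
    and A: "A \<in> sets lborel" "A \<subseteq> {0..L}"
    and w: "w \<in> borel_measurable lborel" "\<And>x. 0 \<le> w x"
    and w_int: "set_integrable lborel A (\<lambda>x. w x powr (1/\<beta>))"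
  shows "set_integrable lborel A (\<lambda>x. w x * g x)"
proof -
  have "set_borel_measurable lborel A g"
    using A by (intro set_borel_measurable_subset[OF sobolev_W1p_derivD(1)[OF sob]])
  then have wg_meas: "set_borel_measurable lborel A (\<lambda>x. w x * g x)"
    using borel_measurable_times[OF w(1)]
    by (simp add: set_borel_measurable_def mult.left_commute)
  obtain B where B_int: "set_integrable lborel A B"
    and B_bound: "AE x in lborel. x \<in> A \<longrightarrow> w x * \<bar>g x\<bar> \<le> B x"
  proof (cases "\<beta> = 1")
    case True
    then obtain C where C: "AE x in lborel. x \<in> {0..L} \<longrightarrow> \<bar>g x\<bar> \<le> C"
      using sob by (auto simp: sobolev_W1p_deriv_def)
    show ?thesis
    proof
      show "set_integrable lborel A (\<lambda>x. C * w x)"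
        using w_int True w(2) by (simp add: powr_one)
      show "AE x in lborel. x \<in> A \<longrightarrow> w x * \<bar>g x\<bar> \<le> C * w x"
        using C by eventually_elim
          (use A(2) w(2) in \<open>auto simp: mult.commute[of "w _"] intro!: mult_right_mono\<close>)
    qed
  next
    case False
    then have "set_integrable lborel A (\<lambda>x. \<bar>g x\<bar> powr (1 / (1 - \<beta>)))"
      using sob A by (auto simp: sobolev_W1p_deriv_def intro: set_integrable_subset)
    then show ?thesis
    proof (intro that[of "\<lambda>x. w x powr (1/\<beta>) + \<bar>g x\<bar> powr (1 / (1 - \<beta>))"] AE_I2 impI)
      show "w x * \<bar>g x\<bar> \<le> w x powr (1/\<beta>) + \<bar>g x\<bar> powr (1 / (1 - \<beta>))" for x
        using False assms(2,3) w(2) by (intro Youngs_inequality_unweighted) auto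
    qed (use w_int in auto)
  qed
  show ?thesis
  proof (rule set_integrable_bound[OF B_int wg_meas])
    show "AE x in lborel. x \<in> A \<longrightarrow> norm (w x * g x) \<le> norm (B x)"
      using B_bound by eventually_elim (use w(2) in \<open>force simp: abs_mult\<close>)
  qed
qed

lemma sobolev_W1p_deriv_integrable:
  assumes "sobolev_W1p_deriv L \<beta> f g" "0 < \<beta>" "\<beta> \<le> 1"
  shows "set_integrable lborel {0..L} g"
  using sobolev_W1p_deriv_weighted_integrable[OF assms, of "{0..L}" "\<lambda>_. 1"]
  by (simp add: borel_integrable_atLeastAtMost')

lemma sobolev_W1p_deriv_increment:
  assumes sob: "sobolev_W1p_deriv L \<beta> f g" "0 < \<beta>" "\<beta> \<le> 1"
    and "0 \<le> s" "s \<le> b" "b \<le> L"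
  shows "(LINT p:{s..<b}|lborel. g p) = f b - f s"
proof -
  have g_int: "set_integrable lborel {0..L} g"
    by (rule sobolev_W1p_deriv_integrable[OF sob])
  have Icc_Ico: "(LINT p:{0..x}|lborel. g p) = (LINT p:{0..<x}|lborel. g p)" if "x \<le> L" for x
    using that
    by (intro set_integral_atLeastAtMost_eq_atLeastLessThan
        set_borel_measurable_subset[OF sobolev_W1p_derivD(1)[OF sob(1)]]) auto
  have "(LINT p:{0..<b}|lborel. g p) = (LINT p:{0..<s} \<union> {s..<b}|lborel. g p)"
    using assms by (simp add: ivl_disj_un_two(3))
  also have "\<dots> = (LINT p:{0..<s}|lborel. g p) + (LINT p:{s..<b}|lborel. g p)"
    by (rule set_integral_Un) (use assms in \<open>auto intro: set_integrable_subset[OF g_int]\<close>)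
  finally have "(LINT p:{0..<b}|lborel. g p)
      = (LINT p:{0..<s}|lborel. g p) + (LINT p:{s..<b}|lborel. g p)" .
  moreover have f_eq: "f x = f 0 + (LINT p:{0..<x}|lborel. g p)" if "0 \<le> x" "x \<le> L" for x
    using sobolev_W1p_derivD(2)[OF sob(1), of x] that Icc_Ico[of x] by simp
  ultimately show ?thesis
    using f_eq[of b] f_eq[of s] assms by linarith
qed

lemma sobolev_W1p_deriv_continuous:
  assumes sob: "sobolev_W1p_deriv L \<beta> f g" "0 < \<beta>" "\<beta> \<le> 1"
  shows "continuous_on {0..L} f"
proof -
  have g_int: "set_integrable lborel {0..x} g" if "x \<le> L" for x
    using that by (intro set_integrable_subset[OF sobolev_W1p_deriv_integrable[OF sob]]) auto
  have "continuous_on {0..L} (\<lambda>x. f 0 + integral {0..x} g)"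
    by (intro continuous_intros indefinite_integral_continuous_1
        set_borel_integral_eq_integral(1)[OF g_int]) auto
  moreover have "f x = f 0 + integral {0..x} g" if "x \<in> {0..L}" for x
    using sobolev_W1p_derivD(2)[OF sob(1) that] set_borel_integral_eq_integral(2)[OF g_int] that
    by simp
  ultimately show ?thesis
    using continuous_on_cong by (metis (no_types, lifting))
qed

lemma sobolev_W1p_deriv_uminus:
  assumes "sobolev_W1p_deriv L \<beta> f g"
  shows "sobolev_W1p_deriv L \<beta> (\<lambda>x. - f x) (\<lambda>x. - g x)"
proof -
  have "set_borel_measurable lborel {0..L} (\<lambda>x. - g x)"
    using sobolev_W1p_derivD(1)[OF assms] by (simp add: set_borel_measurable_def)
  moreover have "\<forall>x\<in>{0..L}. - f x = - f 0 + (LINT t:{0..x}|lborel. - g t)"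
  proof
    fix x assume "x \<in> {0..L}"
    then show "- f x = - f 0 + (LINT t:{0..x}|lborel. - g t)"
      using sobolev_W1p_derivD(2)[OF assms, of x] by (simp add: set_lebesgue_integral_def)
  qed
  ultimately show ?thesis
    using assms unfolding sobolev_W1p_deriv_def abs_minus_cancel by blast
qed

lemma caputo_uminus: "caputo \<alpha> (\<lambda>x. - g x) a = - caputo \<alpha> g a"
  by (simp add: caputo_def set_lebesgue_integral_def)

lemma powr_kernel_section_integral:
  fixes a \<alpha> p c :: real
  assumes "c \<noteq> 0 \<Longrightarrow> 0 \<le> p \<and> p < a"
  shows "integrable lborel (\<lambda>s. if 0 \<le> s \<and> s \<le> p then \<alpha> * (a - s) powr (-\<alpha>-1) * c else 0)"
    and "(\<integral>s. (if 0 \<le> s \<and> s \<le> p then \<alpha> * (a - s) powr (-\<alpha>-1) * c else 0) \<partial>lborel)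
           = c * ((a - p) powr (-\<alpha>) - a powr (-\<alpha>))"
proof -
  have kernel_section: "(\<lambda>s. if 0 \<le> s \<and> s \<le> p then \<alpha> * (a - s) powr (-\<alpha>-1) * c else 0)
      = (\<lambda>s. c * (indicator {0..p} s *\<^sub>R (\<alpha> * (a - s) powr (-\<alpha>-1))))"
    by (auto simp: indicator_def)
  show "integrable lborel (\<lambda>s. if 0 \<le> s \<and> s \<le> p then \<alpha> * (a - s) powr (-\<alpha>-1) * c else 0)"
    unfolding kernel_section
  proof (rule integrable_mult_right)
    assume "c \<noteq> 0"
    then have "set_integrable lborel {0..p} (\<lambda>s. \<alpha> * (a - s) powr (-\<alpha>-1))"
      using assms by (intro borel_integrable_atLeastAtMost' continuous_intros) auto
    then show "integrable lborel (\<lambda>s. indicator {0..p} s *\<^sub>R (\<alpha> * (a - s) powr (-\<alpha>-1)))"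
      by (simp add: set_integrable_def)
  qed
  show "(\<integral>s. (if 0 \<le> s \<and> s \<le> p then \<alpha> * (a - s) powr (-\<alpha>-1) * c else 0) \<partial>lborel)
           = c * ((a - p) powr (-\<alpha>) - a powr (-\<alpha>))"
    using assms powr_kernel_integral[of p a \<alpha>]
    unfolding kernel_section set_lebesgue_integral_def by (cases "c = 0") auto
qed

lemma powr_kernel_triangle_integrable:
  fixes G :: "real \<Rightarrow> real" and a \<alpha> :: real
  assumes "0 < \<alpha>" and G_int: "integrable lborel G"
    and wG_int: "integrable lborel (\<lambda>p. (a - p) powr (-\<alpha>) * G p)"
    and support: "\<And>p. G p \<noteq> 0 \<Longrightarrow> 0 \<le> p \<and> p < a"
  shows "integrable (lborel \<Otimes>\<^sub>M lborel)
           (\<lambda>(p, s). if 0 \<le> s \<and> s \<le> p then \<alpha> * (a - s) powr (-\<alpha>-1) * G p else 0)"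
proof (rule lborel_pair.Fubini_integrable)
  have [measurable]: "G \<in> borel_measurable lborel"
    using G_int by auto
  show "(\<lambda>(p, s). if 0 \<le> s \<and> s \<le> p then \<alpha> * (a - s) powr (-\<alpha>-1) * G p else 0)
      \<in> borel_measurable (lborel \<Otimes>\<^sub>M lborel)"
    by measurable
  show "AE p in lborel. integrable lborel
      (\<lambda>s. case (p, s) of (p, s) \<Rightarrow> if 0 \<le> s \<and> s \<le> p then \<alpha> * (a - s) powr (-\<alpha>-1) * G p else 0)"
    using powr_kernel_section_integral(1)[OF support] by simp
  have "\<bar>if 0 \<le> s \<and> s \<le> p then \<alpha> * (a - s) powr (-\<alpha>-1) * G p else 0\<bar>
      = (if 0 \<le> s \<and> s \<le> p then \<alpha> * (a - s) powr (-\<alpha>-1) * \<bar>G p\<bar> else 0)" for p s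
    using assms(1) by (simp add: abs_mult)
  then have norm_integral:
    "(\<integral>s. \<bar>if 0 \<le> s \<and> s \<le> p then \<alpha> * (a - s) powr (-\<alpha>-1) * G p else 0\<bar> \<partial>lborel)
      = \<bar>G p\<bar> * ((a - p) powr (-\<alpha>) - a powr (-\<alpha>))" for p
    using powr_kernel_section_integral(2)[of "\<bar>G p\<bar>" p a \<alpha>] support[of p] by simp
  have "integrable lborel (\<lambda>p. \<bar>(a - p) powr (-\<alpha>) * G p\<bar> - a powr (-\<alpha>) * \<bar>G p\<bar>)"
    using wG_int G_int
    by (intro Bochner_Integration.integrable_diff integrable_abs integrable_mult_right)
  then show "integrable lborel (\<lambda>p. \<integral>s. norm (case (p, s) of (p, s) \<Rightarrow>
      if 0 \<le> s \<and> s \<le> p then \<alpha> * (a - s) powr (-\<alpha>-1) * G p else 0) \<partial>lborel)"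
    by (simp add: norm_integral abs_mult algebra_simps)
qed

lemma set_integral_powr_kernel_swap:
  fixes G :: "real \<Rightarrow> real" and a \<alpha> :: real
  assumes "0 < \<alpha>"
    and G_int: "set_integrable lborel {0..<a} G"
    and wG_int: "set_integrable lborel {0..<a} (\<lambda>p. (a - p) powr (-\<alpha>) * G p)"
  shows "set_integrable lborel {0..<a} (\<lambda>s. \<alpha> * (a - s) powr (-\<alpha>-1) * (LINT p:{s..<a}|lborel. G p))"
    and "(LINT p:{0..<a}|lborel. ((a - p) powr (-\<alpha>) - a powr (-\<alpha>)) * G p)
       = (LINT s:{0..<a}|lborel. \<alpha> * (a - s) powr (-\<alpha>-1) * (LINT p:{s..<a}|lborel. G p))"
proof -
  define G0 where "G0 p = indicator {0..<a} p * G p" for p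
  define \<Phi> where "\<Phi> p s = (if 0 \<le> s \<and> s \<le> p then \<alpha> * (a - s) powr (-\<alpha>-1) * G0 p else 0)" for p s
  have support: "0 \<le> p \<and> p < a" if "G0 p \<noteq> 0" for p
    using that by (auto simp: G0_def indicator_def)
  have "integrable lborel G0" "integrable lborel (\<lambda>p. (a - p) powr (-\<alpha>) * G0 p)"
    using G_int wG_int by (simp_all add: set_integrable_def G0_def[abs_def] mult.left_commute)
  then have \<Phi>_int: "integrable (lborel \<Otimes>\<^sub>M lborel) (\<lambda>(p, s). \<Phi> p s)"
    unfolding \<Phi>_def using assms(1) support by (intro powr_kernel_triangle_integrable)
  have \<Phi>_integral_s: "(\<integral>s. \<Phi> p s \<partial>lborel) = G0 p * ((a - p) powr (-\<alpha>) - a powr (-\<alpha>))" for p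
    unfolding \<Phi>_def by (rule powr_kernel_section_integral(2)[OF support])
  have "(\<lambda>p. \<Phi> p s)
      = (\<lambda>p. indicator {0..<a} s * (\<alpha> * (a - s) powr (-\<alpha>-1)) * (indicator {s..<a} p * G p))" for s
    by (auto simp: \<Phi>_def G0_def indicator_def)
  then have \<Phi>_integral_p: "(\<integral>p. \<Phi> p s \<partial>lborel)
      = indicator {0..<a} s * (\<alpha> * (a - s) powr (-\<alpha>-1) * (LINT p:{s..<a}|lborel. G p))" for s
    by (simp add: set_lebesgue_integral_def)
  show "set_integrable lborel {0..<a} (\<lambda>s. \<alpha> * (a - s) powr (-\<alpha>-1) * (LINT p:{s..<a}|lborel. G p))"
    using lborel_pair.integrable_snd[OF \<Phi>_int] by (simp add: \<Phi>_integral_p set_integrable_def)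
  have "(LINT p:{0..<a}|lborel. ((a - p) powr (-\<alpha>) - a powr (-\<alpha>)) * G p)
      = (\<integral>p. \<integral>s. \<Phi> p s \<partial>lborel \<partial>lborel)"
    by (simp add: \<Phi>_integral_s set_lebesgue_integral_def G0_def mult_ac)
  also have "\<dots> = (\<integral>s. \<integral>p. \<Phi> p s \<partial>lborel \<partial>lborel)"
    using lborel_pair.Fubini_integral[OF \<Phi>_int] by simp
  also have "\<dots> = (LINT s:{0..<a}|lborel. \<alpha> * (a - s) powr (-\<alpha>-1) * (LINT p:{s..<a}|lborel. G p))"
    by (simp add: \<Phi>_integral_p set_lebesgue_integral_def)
  finally show "(LINT p:{0..<a}|lborel. ((a - p) powr (-\<alpha>) - a powr (-\<alpha>)) * G p)
       = (LINT s:{0..<a}|lborel. \<alpha> * (a - s) powr (-\<alpha>-1) * (LINT p:{s..<a}|lborel. G p))" .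
qed

lemma caputo_eq_marchaud:
  fixes L \<beta> a \<alpha> :: real and f g :: "real \<Rightarrow> real"
  assumes sob: "sobolev_W1p_deriv L \<beta> f g" "0 < \<beta>" "\<beta> \<le> 1"
    and a: "0 \<le> a" "a \<le> L" and \<alpha>: "0 < \<alpha>" "\<alpha> < \<beta>"
  shows "set_integrable lborel {0..<a} (\<lambda>s. \<alpha> * (a - s) powr (-\<alpha>-1) * (f a - f s))"
    and "caputo \<alpha> g a = (a powr (-\<alpha>) * (f a - f 0)
           + (LINT s:{0..<a}|lborel. \<alpha> * (a - s) powr (-\<alpha>-1) * (f a - f s))) / Gamma (1 - \<alpha>)"
proof -
  have g_int: "set_integrable lborel {0..<a} g"
    using a by (intro set_integrable_subset[OF sobolev_W1p_deriv_integrable[OF sob]]) auto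
  have "set_integrable lborel {0..<a} (\<lambda>p. ((a - p) powr (-\<alpha>)) powr (1/\<beta>))"
    using set_integrable_powr_kernel[of a "\<alpha>/\<beta>"] a \<alpha> by (simp add: powr_powr)
  then have wg_int: "set_integrable lborel {0..<a} (\<lambda>p. (a - p) powr (-\<alpha>) * g p)"
    using a by (intro sobolev_W1p_deriv_weighted_integrable[OF sob]) auto
  have increment: "(LINT p:{s..<a}|lborel. g p) = f a - f s" if "s \<in> {0..a}" for s
    using that a by (intro sobolev_W1p_deriv_increment[OF sob]) auto
  note swap = set_integral_powr_kernel_swap[OF \<alpha>(1) g_int wg_int]
  have "set_integrable lborel {0..<a} (\<lambda>s. \<alpha> * (a - s) powr (-\<alpha>-1) * (LINT p:{s..<a}|lborel. g p))
      = set_integrable lborel {0..<a} (\<lambda>s. \<alpha> * (a - s) powr (-\<alpha>-1) * (f a - f s))"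
    by (rule set_integrable_cong) (simp_all add: increment)
  with swap(1) show "set_integrable lborel {0..<a} (\<lambda>s. \<alpha> * (a - s) powr (-\<alpha>-1) * (f a - f s))"
    by simp
  have "set_borel_measurable lborel {0..a} g"
    using a by (intro set_borel_measurable_subset[OF sobolev_W1p_derivD(1)[OF sob(1)]]) auto
  then have "(\<lambda>p. indicator {0..a} p * g p) \<in> borel_measurable lborel"
    by (simp add: set_borel_measurable_def)
  then have "(\<lambda>p. (a - p) powr (-\<alpha>) * (indicator {0..a} p * g p)) \<in> borel_measurable lborel"
    by (rule borel_measurable_times[rotated]) measurable
  then have "(LINT p:{0..a}|lborel. (a - p) powr (-\<alpha>) * g p)
      = (LINT p:{0..<a}|lborel. (a - p) powr (-\<alpha>) * g p)"
    by (intro set_integral_atLeastAtMost_eq_atLeastLessThan)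
       (simp add: set_borel_measurable_def mult.left_commute)
  also have "\<dots> = (LINT p:{0..<a}|lborel. ((a - p) powr (-\<alpha>) - a powr (-\<alpha>)) * g p)
                  + a powr (-\<alpha>) * (LINT p:{0..<a}|lborel. g p)"
    using set_integral_diff(2)[OF wg_int set_integrable_mult_right[OF g_int, of "a powr (-\<alpha>)"]]
    by (simp add: left_diff_distrib)
  also have "(LINT p:{0..<a}|lborel. ((a - p) powr (-\<alpha>) - a powr (-\<alpha>)) * g p)
           = (LINT s:{0..<a}|lborel. \<alpha> * (a - s) powr (-\<alpha>-1) * (f a - f s))"
    unfolding swap(2) by (rule set_lebesgue_integral_cong) (simp_all add: increment)
  finally show "caputo \<alpha> g a = (a powr (-\<alpha>) * (f a - f 0)
           + (LINT s:{0..<a}|lborel. \<alpha> * (a - s) powr (-\<alpha>-1) * (f a - f s))) / Gamma (1 - \<alpha>)"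
    using increment[of 0] a by (simp add: caputo_def)
qed

lemma set_integral_pos_if_ge_on_interval:
  fixes h :: "real \<Rightarrow> real" and A :: "real set"
  assumes "set_integrable lborel A h" "\<And>x. x \<in> A \<Longrightarrow> 0 \<le> h x"
    and "{u..v} \<subseteq> A" "u < v" "0 < c" "\<And>x. x \<in> {u..v} \<Longrightarrow> c \<le> h x"
  shows "0 < (LINT x:A|lborel. h x)"
proof -
  have "integrable lborel (\<lambda>x. indicator {u..v} x * c)"
    using borel_integrable_atLeastAtMost[of u v "\<lambda>_. c"] by (simp add: mult.commute)
  moreover have "indicator {u..v} x * c \<le> indicator A x * h x" for x
    using assms(2-6) by (auto simp: indicator_def)
  ultimately have "(\<integral>x. indicator {u..v} x * c \<partial>lborel) \<le> (LINT x:A|lborel. h x)"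
    using assms(1) unfolding set_lebesgue_integral_def set_integrable_def
    by (intro integral_mono) auto
  moreover have "(\<integral>x. indicator {u..v} x * c \<partial>lborel) = (v - u) * c"
    using assms(4) by simp
  ultimately show ?thesis
    using assms(4,5) by (smt (verit) mult_pos_pos)
qed

lemma caputo_ge_marchaud_integral_at_max:
  fixes L \<beta> a \<alpha> :: real and f g :: "real \<Rightarrow> real"
  assumes sob: "sobolev_W1p_deriv L \<beta> f g" "0 < \<beta>" "\<beta> \<le> 1"
    and a: "0 \<le> a" "a \<le> L" and \<alpha>: "0 < \<alpha>" "\<alpha> < \<beta>"
    and max: "\<And>x. x \<in> {0..a} \<Longrightarrow> f x \<le> f a"
  shows "0 \<le> (LINT s:{0..<a}|lborel. \<alpha> * (a - s) powr (-\<alpha>-1) * (f a - f s))"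
    and "(LINT s:{0..<a}|lborel. \<alpha> * (a - s) powr (-\<alpha>-1) * (f a - f s)) / Gamma (1 - \<alpha>)
           \<le> caputo \<alpha> g a"
proof -
  show "0 \<le> (LINT s:{0..<a}|lborel. \<alpha> * (a - s) powr (-\<alpha>-1) * (f a - f s))"
    unfolding set_lebesgue_integral_def using \<alpha> max
    by (intro integral_nonneg_AE AE_I2) (auto simp: indicator_def)
  have "0 \<le> a powr (-\<alpha>) * (f a - f 0)"
    using max a by simp
  moreover have "0 < Gamma (1 - \<alpha>)"
    using \<alpha> sob by simp
  ultimately show "(LINT s:{0..<a}|lborel. \<alpha> * (a - s) powr (-\<alpha>-1) * (f a - f s)) / Gamma (1 - \<alpha>)
           \<le> caputo \<alpha> g a"
    unfolding caputo_eq_marchaud(2)[OF sob a \<alpha>] by (intro divide_right_mono) auto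
qed

lemma caputo_nonneg_at_max:
  fixes L \<beta> a \<alpha> :: real and f g :: "real \<Rightarrow> real"
  assumes sob: "sobolev_W1p_deriv L \<beta> f g" "0 < \<beta>" "\<beta> \<le> 1"
    and a: "0 \<le> a" "a \<le> L" and \<alpha>: "0 < \<alpha>" "\<alpha> < \<beta>"
    and max: "\<And>x. x \<in> {0..a} \<Longrightarrow> f x \<le> f a"
  shows "0 \<le> caputo \<alpha> g a"
proof -
  have "0 < Gamma (1 - \<alpha>)"
    using \<alpha> sob by simp
  then show ?thesis
    using caputo_ge_marchaud_integral_at_max[OF assms] by (meson divide_nonneg_pos order_trans)
qed

lemma caputo_pos_at_max:
  fixes L \<beta> a \<alpha> x :: real and f g :: "real \<Rightarrow> real"
  assumes sob: "sobolev_W1p_deriv L \<beta> f g" "0 < \<beta>" "\<beta> \<le> 1"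
    and a: "0 \<le> a" "a \<le> L" and \<alpha>: "0 < \<alpha>" "\<alpha> < \<beta>"
    and max: "\<And>x. x \<in> {0..a} \<Longrightarrow> f x \<le> f a"
    and x: "x \<in> {0..a}" "f x \<noteq> f a"
  shows "0 < caputo \<alpha> g a"
proof -
  have "f x < f a"
    using max x by force
  then have "x < a"
    using x by (cases "x = a") auto
  define \<epsilon> where "\<epsilon> = (f a - f x) / 2"
  have "0 < \<epsilon>"
    using \<open>f x < f a\<close> by (simp add: \<epsilon>_def)
  obtain d where "d > 0" and d: "\<And>y. y \<in> {0..L} \<Longrightarrow> dist y x < d \<Longrightarrow> dist (f y) (f x) < \<epsilon>"
    using sobolev_W1p_deriv_continuous[OF sob] x(1) a \<open>0 < \<epsilon>\<close>
    unfolding continuous_on_iff by (metis atLeastAtMost_iff order_trans)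
  define \<eta> where "\<eta> = min (d/2) ((a - x)/2)"
  have \<eta>: "0 < \<eta>" "\<eta> < d" "x + \<eta> < a"
    using \<open>d > 0\<close> \<open>x < a\<close> by (auto simp: \<eta>_def min_def field_simps)
  define c where "c = \<alpha> * a powr (-\<alpha>-1) * \<epsilon>"
  have "0 < c"
    using \<alpha> \<open>x < a\<close> x(1) \<open>0 < \<epsilon>\<close> by (simp add: c_def)
  have "c \<le> \<alpha> * (a - s) powr (-\<alpha>-1) * (f a - f s)" if s: "s \<in> {x..x+\<eta>}" for s
  proof -
    have "s \<in> {0..L}" "dist s x < d" "s < a"
      using s x(1) \<eta> a by (auto simp: dist_real_def)
    then have "\<bar>f s - f x\<bar> < \<epsilon>"
      using d[of s] by (simp add: dist_real_def)
    then have "\<epsilon> \<le> f a - f s"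
      unfolding \<epsilon>_def abs_less_iff by argo
    moreover have "a powr (-\<alpha>-1) \<le> (a - s) powr (-\<alpha>-1)"
      using s x(1) \<open>s < a\<close> \<alpha> by (intro powr_mono2') auto
    ultimately show ?thesis
      unfolding c_def using \<alpha> \<open>0 < \<epsilon>\<close> by (intro mult_mono) auto
  qed
  then have "0 < (LINT s:{0..<a}|lborel. \<alpha> * (a - s) powr (-\<alpha>-1) * (f a - f s))"
    using \<alpha> max x(1) \<eta> \<open>0 < c\<close>
    by (intro set_integral_pos_if_ge_on_interval[OF caputo_eq_marchaud(1)[OF sob a \<alpha>],
          where u = x and v = "x + \<eta>" and c = c]) auto
  moreover have "0 < Gamma (1 - \<alpha>)"
    using \<alpha> sob by simp
  ultimately show ?thesis
    using caputo_ge_marchaud_integral_at_max(2)[OF sob a \<alpha> max]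
    by (meson divide_pos_pos order_less_le_trans)
qed

theorem lemma6:
  fixes L \<beta> x0 :: real and f g :: "real \<Rightarrow> real"
  assumes "L > 0" and "0 < \<beta>" and "\<beta> \<le> 1"
    and "sobolev_W1p_deriv L \<beta> f g"
    and "x0 \<in> {0<..L}"
  shows "((\<forall>x\<in>{0..L}. f x \<le> f x0) \<longrightarrow>
            (\<forall>\<alpha>. 0 < \<alpha> \<and> \<alpha> < \<beta> \<longrightarrow>
               caputo \<alpha> g x0 \<ge> 0 \<and>
               ((\<exists>x\<in>{0..x0}. f x \<noteq> f x0) \<longrightarrow> caputo \<alpha> g x0 > 0)))
       \<and> ((\<forall>x\<in>{0..L}. f x0 \<le> f x) \<longrightarrow>
            (\<forall>\<alpha>. 0 < \<alpha> \<and> \<alpha> < \<beta> \<longrightarrow>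
               caputo \<alpha> g x0 \<le> 0 \<and>
               ((\<exists>x\<in>{0..x0}. f x \<noteq> f x0) \<longrightarrow> caputo \<alpha> g x0 < 0)))"
proof -
  have x0: "0 \<le> x0" "x0 \<le> L"
    using assms(5) by auto
  have at_max: "0 \<le> caputo \<alpha> g' x0 \<and> ((\<exists>x\<in>{0..x0}. f' x \<noteq> f' x0) \<longrightarrow> 0 < caputo \<alpha> g' x0)"
    if sob': "sobolev_W1p_deriv L \<beta> f' g'" and max: "\<forall>x\<in>{0..L}. f' x \<le> f' x0"
      and \<alpha>: "0 < \<alpha>" "\<alpha> < \<beta>" for f' g' \<alpha>
  proof -
    have max': "f' x \<le> f' x0" if "x \<in> {0..x0}" for x
      using max that x0 by auto
    show ?thesis
      using caputo_nonneg_at_max[OF sob' assms(2,3) x0 \<alpha> max']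
        caputo_pos_at_max[OF sob' assms(2,3) x0 \<alpha> max'] by blast
  qed
  show ?thesis
    using at_max[OF assms(4)] at_max[OF sobolev_W1p_deriv_uminus[OF assms(4)]]
    by (auto simp: caputo_uminus)
qed

end
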